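(* Let $\mathbf{L}=(L,\le)$ be a nontrivial finite join-semilattice with greatest element $1$ satisfying property $( * )$, and let $(R,\vee,\circ)$ be a subsemiring of $(\mathrm{JM}_1(\mathbf{L}),\vee,\circ)$ such that (i) $f_{a,b}\in R$ for all $a\in L\setminus\{1\}$ and $b\in L$; (ii) for every $f\in R$ there exist $a\in L\setminus\{1\}$ and $b\in L$ with $f_{a,b}\le f$ (pointwise). Then $(R,\vee,\circ)$ is a finite simple additively idempotent semiring with absorbing greatest element, and it possesses an idempotent irreducible $R$-semimodule satisfying $( * )$. Conversely, every finite simple additively idempotent semiring $(S,+,\cdot)$ with $|S|>2$, with absorbing greatest element, and which possesses an idempotent irreducible $S$-semimodule satisfying $( * )$, is isomorphic to such a semiring $(R,\vee,\circ)$ for some such $\mathbf{L}$.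
   Context: A semiring is a nonempty set with a commutative semigroup operation $+$ and a semigroup operation $\cdot$ satisfying both distributive laws; simple if its only congruences are the identity and the full relation; additively idempotent if $r+r=r$, with order $x\le y:\Leftrightarrow x+y=y$ and (finite case) greatest element the sum of all elements. An element is absorbing if $sr=r=rs$ for all $s$. For a finite join-semilattice $\mathbf{L}$, $\mathrm{JM}_1(\mathbf{L})$ is the set of join-preserving maps $f:L\to L$ with $f(1)=1$, a semiring under pointwise join and composition; $f_{a,b}(x)=b$ if $x\le a$ and $1$ otherwise. An $R$-semimodule is a commutative semigroup $(M,+)$ with an action $R\times M\to M$ such that $r(sx)=(rs)x$, $(r+s)x=rx+sx$, $r(x+y)=rx+ry$; it is idempotent if $x+x=x$. A subsemimodule is a subsemigroup closed under the action; a semimodule congruence is an equivalence compatible with $+$ and the action. $M$ is quasitrivial if $rx=sx$ for all $r,s\in R,x\in M$; id-quasitrivial if $rx=x$ for all $r,x$. $M$ is sub-irreducible if it is not quasitrivial and all its proper subsemimodules are id-quasitrivial; quotient-irreducible if it is not quasitrivial and its only congruences are the identity and $M\times M$; irreducible if both. A finite idempotent commutative semigroup (semilattice) $(M,+)$ with greatest element $\infty_M$ satisfies $( * )$ if there exists $u\in M$ with $\infty_M\ne u+x$ for all $x\in M\setminus\{\infty_M\}$. *)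

theory Defs
  imports "HOL-Library.FuncSet"
begin

definition semiring :: "'a set \<Rightarrow> ('a \<Rightarrow> 'a \<Rightarrow> 'a) \<Rightarrow> ('a \<Rightarrow> 'a \<Rightarrow> 'a) \<Rightarrow> bool" where
  "semiring S add mul \<longleftrightarrow> S \<noteq> {} \<and>
     (\<forall>x\<in>S. \<forall>y\<in>S. add x y \<in> S \<and> mul x y \<in> S) \<and>
     (\<forall>x\<in>S. \<forall>y\<in>S. add x y = add y x) \<and>
     (\<forall>x\<in>S. \<forall>y\<in>S. \<forall>z\<in>S.
        add (add x y) z = add x (add y z) \<and>
        mul (mul x y) z = mul x (mul y z) \<and>
        mul x (add y z) = add (mul x y) (mul x z) \<and>
        mul (add x y) z = add (mul x z) (mul y z))"

definition semiring_cong :: "'a set \<Rightarrow> ('a \<Rightarrow> 'a \<Rightarrow> 'a) \<Rightarrow> ('a \<Rightarrow> 'a \<Rightarrow> 'a) \<Rightarrow> ('a \<times> 'a) set \<Rightarrow> bool" where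
  "semiring_cong S add mul \<theta> \<longleftrightarrow> equiv S \<theta> \<and>
     (\<forall>a b c d. (a, b) \<in> \<theta> \<longrightarrow> (c, d) \<in> \<theta> \<longrightarrow>
        (add a c, add b d) \<in> \<theta> \<and> (mul a c, mul b d) \<in> \<theta>)"

definition simple_semiring :: "'a set \<Rightarrow> ('a \<Rightarrow> 'a \<Rightarrow> 'a) \<Rightarrow> ('a \<Rightarrow> 'a \<Rightarrow> 'a) \<Rightarrow> bool" where
  "simple_semiring S add mul \<longleftrightarrow> semiring S add mul \<and>
     (\<forall>\<theta>. semiring_cong S add mul \<theta> \<longrightarrow> \<theta> = Id_on S \<or> \<theta> = S \<times> S)"

definition add_idempotent :: "'a set \<Rightarrow> ('a \<Rightarrow> 'a \<Rightarrow> 'a) \<Rightarrow> bool" where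
  "add_idempotent S add \<longleftrightarrow> (\<forall>x\<in>S. add x x = x)"

definition has_absorbing_greatest :: "'a set \<Rightarrow> ('a \<Rightarrow> 'a \<Rightarrow> 'a) \<Rightarrow> ('a \<Rightarrow> 'a \<Rightarrow> 'a) \<Rightarrow> bool" where
  "has_absorbing_greatest S add mul \<longleftrightarrow>
     (\<exists>g\<in>S. (\<forall>x\<in>S. add x g = g) \<and> (\<forall>s\<in>S. mul s g = g \<and> mul g s = g))"

definition semiring_iso :: "'a set \<Rightarrow> ('a \<Rightarrow> 'a \<Rightarrow> 'a) \<Rightarrow> ('a \<Rightarrow> 'a \<Rightarrow> 'a) \<Rightarrow>
    'b set \<Rightarrow> ('b \<Rightarrow> 'b \<Rightarrow> 'b) \<Rightarrow> ('b \<Rightarrow> 'b \<Rightarrow> 'b) \<Rightarrow> ('a \<Rightarrow> 'b) \<Rightarrow> bool" where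
  "semiring_iso S add mul T add' mul' \<phi> \<longleftrightarrow> bij_betw \<phi> S T \<and>
     (\<forall>x\<in>S. \<forall>y\<in>S. \<phi> (add x y) = add' (\<phi> x) (\<phi> y) \<and> \<phi> (mul x y) = mul' (\<phi> x) (\<phi> y))"

definition semimodule :: "'s set \<Rightarrow> ('s \<Rightarrow> 's \<Rightarrow> 's) \<Rightarrow> ('s \<Rightarrow> 's \<Rightarrow> 's) \<Rightarrow>
    'm set \<Rightarrow> ('m \<Rightarrow> 'm \<Rightarrow> 'm) \<Rightarrow> ('s \<Rightarrow> 'm \<Rightarrow> 'm) \<Rightarrow> bool" where
  "semimodule S add mul M madd act \<longleftrightarrow> semiring S add mul \<and>
     (\<forall>x\<in>M. \<forall>y\<in>M. madd x y \<in> M \<and> madd x y = madd y x) \<and>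
     (\<forall>x\<in>M. \<forall>y\<in>M. \<forall>z\<in>M. madd (madd x y) z = madd x (madd y z)) \<and>
     (\<forall>r\<in>S. \<forall>x\<in>M. act r x \<in> M) \<and>
     (\<forall>r\<in>S. \<forall>s\<in>S. \<forall>x\<in>M.
        act r (act s x) = act (mul r s) x \<and> act (add r s) x = madd (act r x) (act s x)) \<and>
     (\<forall>r\<in>S. \<forall>x\<in>M. \<forall>y\<in>M. act r (madd x y) = madd (act r x) (act r y))"

definition smod_idempotent :: "'m set \<Rightarrow> ('m \<Rightarrow> 'm \<Rightarrow> 'm) \<Rightarrow> bool" where
  "smod_idempotent M madd \<longleftrightarrow> (\<forall>x\<in>M. madd x x = x)"

definition subsemimodule :: "'s set \<Rightarrow> 'm set \<Rightarrow> ('m \<Rightarrow> 'm \<Rightarrow> 'm) \<Rightarrow> ('s \<Rightarrow> 'm \<Rightarrow> 'm) \<Rightarrow> 'm set \<Rightarrow> bool" where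
  "subsemimodule S M madd act N \<longleftrightarrow> N \<noteq> {} \<and> N \<subseteq> M \<and>
     (\<forall>x\<in>N. \<forall>y\<in>N. madd x y \<in> N) \<and> (\<forall>r\<in>S. \<forall>x\<in>N. act r x \<in> N)"

definition quasitrivial :: "'s set \<Rightarrow> 'm set \<Rightarrow> ('s \<Rightarrow> 'm \<Rightarrow> 'm) \<Rightarrow> bool" where
  "quasitrivial S M act \<longleftrightarrow> (\<forall>r\<in>S. \<forall>s\<in>S. \<forall>x\<in>M. act r x = act s x)"

definition id_quasitrivial :: "'s set \<Rightarrow> 'm set \<Rightarrow> ('s \<Rightarrow> 'm \<Rightarrow> 'm) \<Rightarrow> bool" where
  "id_quasitrivial S M act \<longleftrightarrow> (\<forall>r\<in>S. \<forall>x\<in>M. act r x = x)"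

definition smod_cong :: "'s set \<Rightarrow> 'm set \<Rightarrow> ('m \<Rightarrow> 'm \<Rightarrow> 'm) \<Rightarrow> ('s \<Rightarrow> 'm \<Rightarrow> 'm) \<Rightarrow> ('m \<times> 'm) set \<Rightarrow> bool" where
  "smod_cong S M madd act \<theta> \<longleftrightarrow> equiv M \<theta> \<and>
     (\<forall>a b c d. (a, b) \<in> \<theta> \<longrightarrow> (c, d) \<in> \<theta> \<longrightarrow> (madd a c, madd b d) \<in> \<theta>) \<and>
     (\<forall>r\<in>S. \<forall>a b. (a, b) \<in> \<theta> \<longrightarrow> (act r a, act r b) \<in> \<theta>)"

definition sub_irreducible :: "'s set \<Rightarrow> ('s \<Rightarrow> 's \<Rightarrow> 's) \<Rightarrow> ('s \<Rightarrow> 's \<Rightarrow> 's) \<Rightarrow>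
    'm set \<Rightarrow> ('m \<Rightarrow> 'm \<Rightarrow> 'm) \<Rightarrow> ('s \<Rightarrow> 'm \<Rightarrow> 'm) \<Rightarrow> bool" where
  "sub_irreducible S add mul M madd act \<longleftrightarrow> semimodule S add mul M madd act \<and>
     \<not> quasitrivial S M act \<and>
     (\<forall>N. subsemimodule S M madd act N \<and> N \<noteq> M \<longrightarrow> id_quasitrivial S N act)"

definition quot_irreducible :: "'s set \<Rightarrow> ('s \<Rightarrow> 's \<Rightarrow> 's) \<Rightarrow> ('s \<Rightarrow> 's \<Rightarrow> 's) \<Rightarrow>
    'm set \<Rightarrow> ('m \<Rightarrow> 'm \<Rightarrow> 'm) \<Rightarrow> ('s \<Rightarrow> 'm \<Rightarrow> 'm) \<Rightarrow> bool" where
  "quot_irreducible S add mul M madd act \<longleftrightarrow> semimodule S add mul M madd act \<and>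
     \<not> quasitrivial S M act \<and>
     (\<forall>\<theta>. smod_cong S M madd act \<theta> \<longrightarrow> \<theta> = Id_on M \<or> \<theta> = M \<times> M)"

definition irreducible_smod :: "'s set \<Rightarrow> ('s \<Rightarrow> 's \<Rightarrow> 's) \<Rightarrow> ('s \<Rightarrow> 's \<Rightarrow> 's) \<Rightarrow>
    'm set \<Rightarrow> ('m \<Rightarrow> 'm \<Rightarrow> 'm) \<Rightarrow> ('s \<Rightarrow> 'm \<Rightarrow> 'm) \<Rightarrow> bool" where
  "irreducible_smod S add mul M madd act \<longleftrightarrow>
     sub_irreducible S add mul M madd act \<and> quot_irreducible S add mul M madd act"

definition sl_star :: "'m set \<Rightarrow> ('m \<Rightarrow> 'm \<Rightarrow> 'm) \<Rightarrow> bool" where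
  "sl_star M madd \<longleftrightarrow> finite M \<and>
     (\<exists>g\<in>M. (\<forall>x\<in>M. madd x g = g) \<and> (\<exists>u\<in>M. \<forall>x\<in>M - {g}. g \<noteq> madd u x))"

definition fin_join_sl :: "'l set \<Rightarrow> ('l \<Rightarrow> 'l \<Rightarrow> 'l) \<Rightarrow> 'l \<Rightarrow> bool" where
  "fin_join_sl L j one \<longleftrightarrow> finite L \<and> one \<in> L \<and>
     (\<forall>x\<in>L. \<forall>y\<in>L. j x y \<in> L \<and> j x y = j y x) \<and>
     (\<forall>x\<in>L. j x x = x) \<and>
     (\<forall>x\<in>L. \<forall>y\<in>L. \<forall>z\<in>L. j (j x y) z = j x (j y z)) \<and>
     (\<forall>x\<in>L. j x one = one)"

definition sl_le :: "('l \<Rightarrow> 'l \<Rightarrow> 'l) \<Rightarrow> 'l \<Rightarrow> 'l \<Rightarrow> bool" where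
  "sl_le j x y \<longleftrightarrow> j x y = y"

text \<open>Maps on L are represented as extensional functions (undefined outside L).\<close>
definition JM1 :: "'l set \<Rightarrow> ('l \<Rightarrow> 'l \<Rightarrow> 'l) \<Rightarrow> 'l \<Rightarrow> ('l \<Rightarrow> 'l) set" where
  "JM1 L j one = {f. f \<in> extensional L \<and> (\<forall>x\<in>L. f x \<in> L) \<and>
     (\<forall>x\<in>L. \<forall>y\<in>L. f (j x y) = j (f x) (f y)) \<and> f one = one}"

definition fjoin :: "'l set \<Rightarrow> ('l \<Rightarrow> 'l \<Rightarrow> 'l) \<Rightarrow> ('l \<Rightarrow> 'l) \<Rightarrow> ('l \<Rightarrow> 'l) \<Rightarrow> ('l \<Rightarrow> 'l)" where
  "fjoin L j f g = restrict (\<lambda>x. j (f x) (g x)) L"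

definition fcomp :: "'l set \<Rightarrow> ('l \<Rightarrow> 'l) \<Rightarrow> ('l \<Rightarrow> 'l) \<Rightarrow> ('l \<Rightarrow> 'l)" where
  "fcomp L f g = restrict (\<lambda>x. f (g x)) L"

definition fab :: "'l set \<Rightarrow> ('l \<Rightarrow> 'l \<Rightarrow> 'l) \<Rightarrow> 'l \<Rightarrow> 'l \<Rightarrow> 'l \<Rightarrow> ('l \<Rightarrow> 'l)" where
  "fab L j one a b = restrict (\<lambda>x. if sl_le j x a then b else one) L"

definition admissible :: "'l set \<Rightarrow> ('l \<Rightarrow> 'l \<Rightarrow> 'l) \<Rightarrow> 'l \<Rightarrow> ('l \<Rightarrow> 'l) set \<Rightarrow> bool" where
  "admissible L j one R \<longleftrightarrow>
     fin_join_sl L j one \<and> (\<exists>x\<in>L. x \<noteq> one) \<and> sl_star L j \<and>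
     \<comment> \<open>R is a subsemiring of JM_1(L)\<close>
     R \<subseteq> JM1 L j one \<and> R \<noteq> {} \<and>
     (\<forall>f\<in>R. \<forall>g\<in>R. fjoin L j f g \<in> R \<and> fcomp L f g \<in> R) \<and>
     \<comment> \<open>(i)\<close>
     (\<forall>a\<in>L - {one}. \<forall>b\<in>L. fab L j one a b \<in> R) \<and>
     \<comment> \<open>(ii)\<close>
     (\<forall>f\<in>R. \<exists>a\<in>L - {one}. \<exists>b\<in>L. \<forall>x\<in>L. sl_le j (fab L j one a b x) (f x))"

end

theory Submission
  imports Defs
begin

text \<open>
  For the first part, \<open>R\<close> acts on \<open>L\<close> by evaluation. The maps \<open>f\<^sub>a\<^sub>,\<^sub>b\<close> separate any pair
  \<open>p, q\<close> with \<open>\<not> p \<sqsubseteq> q\<close>, as \<open>f\<^sub>q\<^sub>,\<^sub>b p = 1\<close> and \<open>f\<^sub>q\<^sub>,\<^sub>b q = b\<close>; so a nontrivial congruence of \<open>R\<close>, or of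
  the \<open>R\<close>-semimodule \<open>L\<close>, identifies every \<open>f\<^sub>c\<^sub>,\<^sub>b\<close> and, by (ii), every element with the
  constant map \<open>1\<close>.

  Conversely, \<open>S\<close> acts on \<open>M\<close> by join-preserving maps fixing the top \<open>g\<close>, faithfully because
  \<open>S\<close> is simple; so \<open>M\<close> plays the role of \<open>L\<close>. Irreducibility makes the action transitive on
  \<open>M - {g}\<close> and dually transitive on principal downsets. Choosing an element of minimal
  support and using (*) gives maps supported on a principal downset, then a map of minimal
  image is a rank-one map \<open>f\<^sub>a\<^sub>,\<^sub>b\<close>, and composing it with suitable elements yields all
  \<open>f\<^sub>a\<^sub>,\<^sub>b\<close>. Finally the elements above some \<open>f\<^sub>a\<^sub>,\<^sub>b\<close> form an ideal absorbing addition whose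
  Rees congruence is nontrivial, hence total by simplicity: this is (ii).
\<close>

lemma mem_Restr_kernel_iff [simp]:
  "(x, y) \<in> Restr (kernel f) A \<longleftrightarrow> x \<in> A \<and> y \<in> A \<and> f x = f y"
  by (auto simp: kernel_def)

lemma equiv_Restr_kernel: "equiv A (Restr (kernel f) A)"
  by (auto simp: equiv_def refl_on_def sym_def trans_def kernel_def)

lemma inj_on_if_Restr_kernel_eq_Id_on: "Restr (kernel f) A = Id_on A \<Longrightarrow> inj_on f A"
  unfolding inj_on_def by (metis Id_onE mem_Restr_kernel_iff prod.inject)

lemma Restr_kernel_eq_TimesD:
  "Restr (kernel f) A = A \<times> A \<Longrightarrow> x \<in> A \<Longrightarrow> y \<in> A \<Longrightarrow> f x = f y"
  by (metis mem_Restr_kernel_iff mem_Sigma_iff)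

lemma equiv_eq_TimesI:
  assumes "equiv A \<theta>" and "\<And>x. x \<in> A \<Longrightarrow> (x, c) \<in> \<theta>"
  shows "\<theta> = A \<times> A"
proof
  show "\<theta> \<subseteq> A \<times> A" using assms(1) by (simp add: equiv_def)
  show "A \<times> A \<subseteq> \<theta>"
  proof clarify
    fix x y assume "x \<in> A" "y \<in> A"
    then have "(x, c) \<in> \<theta>" "(c, y) \<in> \<theta>"
      using assms equivE symD by metis+
    then show "(x, y) \<in> \<theta>" using assms(1) equivE transD by metis
  qed
qed

lemma equiv_neq_Id_onE:
  assumes "equiv A \<theta>" and "\<theta> \<noteq> Id_on A"
    and antisym: "\<And>x y. x \<in> A \<Longrightarrow> y \<in> A \<Longrightarrow> P x y \<Longrightarrow> P y x \<Longrightarrow> x = y"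
  obtains p q where "(p, q) \<in> \<theta>" and "\<not> P p q"
proof -
  have "Id_on A \<subseteq> \<theta>" using assms(1) by (auto simp: equiv_def refl_on_def)
  then obtain x y where xy: "(x, y) \<in> \<theta>" "(x, y) \<notin> Id_on A"
    using assms(2) by auto
  moreover have "x \<in> A" "y \<in> A" using assms(1) xy(1) by (auto simp: equiv_def)
  moreover have "(y, x) \<in> \<theta>" using assms(1) xy(1) equivE symD by metis
  ultimately show ?thesis using that antisym by (metis Id_onI)
qed

lemma semiring_cong_equiv: "semiring_cong S add mul \<theta> \<Longrightarrow> equiv S \<theta>"
  by (simp add: semiring_cong_def)

lemma semiring_cong_add:
  "semiring_cong S add mul \<theta> \<Longrightarrow> (a, b) \<in> \<theta> \<Longrightarrow> (c, d) \<in> \<theta> \<Longrightarrow> (add a c, add b d) \<in> \<theta>"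
  by (simp add: semiring_cong_def)

lemma semiring_cong_mul:
  "semiring_cong S add mul \<theta> \<Longrightarrow> (a, b) \<in> \<theta> \<Longrightarrow> (c, d) \<in> \<theta> \<Longrightarrow> (mul a c, mul b d) \<in> \<theta>"
  by (simp add: semiring_cong_def)

lemma semiring_cong_refl: "semiring_cong S add mul \<theta> \<Longrightarrow> x \<in> S \<Longrightarrow> (x, x) \<in> \<theta>"
  by (simp add: semiring_cong_def equiv_def refl_on_def)

lemma semiring_cong_sym: "semiring_cong S add mul \<theta> \<Longrightarrow> (x, y) \<in> \<theta> \<Longrightarrow> (y, x) \<in> \<theta>"
  by (meson semiring_cong_equiv equivE symD)

lemma semiring_cong_kernel_hom:
  assumes "semiring S add mul"
    and "\<And>a c. a \<in> S \<Longrightarrow> c \<in> S \<Longrightarrow> f (add a c) = add' (f a) (f c)"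
    and "\<And>a c. a \<in> S \<Longrightarrow> c \<in> S \<Longrightarrow> f (mul a c) = mul' (f a) (f c)"
  shows "semiring_cong S add mul (Restr (kernel f) S)"
  unfolding semiring_cong_def using assms
  by (intro conjI equiv_Restr_kernel allI impI) (auto simp: kernel_def semiring_def)

definition rees_rel :: "'a set \<Rightarrow> 'a set \<Rightarrow> ('a \<times> 'a) set" where
  "rees_rel S I = {(x, y). x \<in> S \<and> y \<in> S \<and> (x = y \<or> x \<in> I \<and> y \<in> I)}"

lemma semiring_cong_rees_rel:
  assumes "semiring S add mul" and "I \<subseteq> S"
    and add_I: "\<And>x y. x \<in> I \<Longrightarrow> y \<in> S \<Longrightarrow> add x y \<in> I"
    and mul_I: "\<And>x y. x \<in> I \<Longrightarrow> y \<in> S \<Longrightarrow> mul x y \<in> I \<and> mul y x \<in> I"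
  shows "semiring_cong S add mul (rees_rel S I)"
proof -
  have closed: "add x y \<in> S" "mul x y \<in> S" "add x y = add y x" if "x \<in> S" "y \<in> S" for x y
    using assms(1) that by (auto simp: semiring_def)
  have "equiv S (rees_rel S I)"
    using assms(2) by (auto simp: rees_rel_def equiv_def refl_on_def sym_def trans_def)
  moreover have "(add a c, add b d) \<in> rees_rel S I \<and> (mul a c, mul b d) \<in> rees_rel S I"
    if "(a, b) \<in> rees_rel S I" "(c, d) \<in> rees_rel S I" for a b c d
  proof -
    have S: "a \<in> S" "b \<in> S" "c \<in> S" "d \<in> S" using that by (auto simp: rees_rel_def)
    have "add a c \<in> I \<and> add b d \<in> I \<and> mul a c \<in> I \<and> mul b d \<in> I"
      if "a \<in> I \<and> b \<in> I \<or> c \<in> I \<and> d \<in> I"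
      using that S add_I mul_I closed(3) by metis
    then show ?thesis using that S closed by (auto simp: rees_rel_def)
  qed
  ultimately show ?thesis by (simp add: semiring_cong_def)
qed

lemma simple_semiring_ideal_eq:
  assumes "simple_semiring S add mul" and "I \<subseteq> S"
    and "\<And>x y. x \<in> I \<Longrightarrow> y \<in> S \<Longrightarrow> add x y \<in> I"
    and "\<And>x y. x \<in> I \<Longrightarrow> y \<in> S \<Longrightarrow> mul x y \<in> I \<and> mul y x \<in> I"
    and "x \<in> I" "y \<in> I" "x \<noteq> y"
  shows "I = S"
proof -
  have "semiring_cong S add mul (rees_rel S I)"
    using assms(1-4) by (intro semiring_cong_rees_rel) (auto simp: simple_semiring_def)
  moreover have "rees_rel S I \<noteq> Id_on S"
    using assms(2,5-7) by (auto simp: rees_rel_def Id_on_def)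
  ultimately have "rees_rel S I = S \<times> S" using assms(1) unfolding simple_semiring_def by blast
  then have "(z, x) \<in> rees_rel S I" if "z \<in> S" for z using that assms(2,5) by blast
  then show ?thesis using assms(2,5) by (auto simp: rees_rel_def)
qed

lemma smod_cong_kernelI:
  assumes "\<And>x y. x \<in> M \<Longrightarrow> y \<in> M \<Longrightarrow> madd x y \<in> M"
    and "\<And>r x. r \<in> S \<Longrightarrow> x \<in> M \<Longrightarrow> act r x \<in> M"
    and "\<And>a b c d. a \<in> M \<Longrightarrow> b \<in> M \<Longrightarrow> c \<in> M \<Longrightarrow> d \<in> M \<Longrightarrow> f a = f b \<Longrightarrow> f c = f d \<Longrightarrow>
      f (madd a c) = f (madd b d)"
    and "\<And>r a b. r \<in> S \<Longrightarrow> a \<in> M \<Longrightarrow> b \<in> M \<Longrightarrow> f a = f b \<Longrightarrow> f (act r a) = f (act r b)"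
  shows "smod_cong S M madd act (Restr (kernel f) M)"
  unfolding smod_cong_def using assms by (intro conjI equiv_Restr_kernel allI impI ballI) (auto simp: kernel_def)

lemma fjoin_apply [simp]: "x \<in> L \<Longrightarrow> fjoin L j f g x = j (f x) (g x)"
  by (simp add: fjoin_def)

lemma fcomp_apply [simp]: "x \<in> L \<Longrightarrow> fcomp L f g x = f (g x)"
  by (simp add: fcomp_def)

lemma fab_apply: "x \<in> L \<Longrightarrow> fab L j one a b x = (if sl_le j x a then b else one)"
  by (simp add: fab_def)

lemma fjoin_extensional [simp]: "fjoin L j f g \<in> extensional L"
  and fcomp_extensional [simp]: "fcomp L f g \<in> extensional L"
  and fab_extensional [simp]: "fab L j one a b \<in> extensional L"
  by (simp_all add: fjoin_def fcomp_def fab_def)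

locale semilattice_top_on =
  fixes A :: "'a set" and join :: "'a \<Rightarrow> 'a \<Rightarrow> 'a" and top :: 'a
  assumes join_closed: "\<And>x y. x \<in> A \<Longrightarrow> y \<in> A \<Longrightarrow> join x y \<in> A"
    and join_comm: "\<And>x y. x \<in> A \<Longrightarrow> y \<in> A \<Longrightarrow> join x y = join y x"
    and join_assoc: "\<And>x y z. x \<in> A \<Longrightarrow> y \<in> A \<Longrightarrow> z \<in> A \<Longrightarrow> join (join x y) z = join x (join y z)"
    and join_idem: "\<And>x. x \<in> A \<Longrightarrow> join x x = x"
    and top_in: "top \<in> A"
    and join_top: "\<And>x. x \<in> A \<Longrightarrow> join x top = top"
begin

abbreviation le :: "'a \<Rightarrow> 'a \<Rightarrow> bool" (infix "\<sqsubseteq>" 50) where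
  "x \<sqsubseteq> y \<equiv> join x y = y"

lemma top_join: "x \<in> A \<Longrightarrow> join top x = top"
  using join_top join_comm top_in by metis

lemma sl_le_refl: "x \<in> A \<Longrightarrow> x \<sqsubseteq> x"
  by (rule join_idem)

lemma sl_le_antisym: "x \<in> A \<Longrightarrow> y \<in> A \<Longrightarrow> x \<sqsubseteq> y \<Longrightarrow> y \<sqsubseteq> x \<Longrightarrow> x = y"
  using join_comm by metis

lemma sl_le_trans: "x \<in> A \<Longrightarrow> y \<in> A \<Longrightarrow> z \<in> A \<Longrightarrow> x \<sqsubseteq> y \<Longrightarrow> y \<sqsubseteq> z \<Longrightarrow> x \<sqsubseteq> z"
  using join_assoc[of x y z] by simp

lemma sl_top_le_eq: "x \<in> A \<Longrightarrow> top \<sqsubseteq> x \<Longrightarrow> x = top"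
  using join_top join_comm top_in by metis

lemma sl_le_join1: "x \<in> A \<Longrightarrow> y \<in> A \<Longrightarrow> x \<sqsubseteq> join x y"
  using join_assoc[of x x y] join_idem by simp

lemma sl_le_join2: "x \<in> A \<Longrightarrow> y \<in> A \<Longrightarrow> y \<sqsubseteq> join x y"
  using sl_le_join1 join_comm by metis

lemma sl_join_le_iff: "x \<in> A \<Longrightarrow> y \<in> A \<Longrightarrow> z \<in> A \<Longrightarrow> join x y \<sqsubseteq> z \<longleftrightarrow> x \<sqsubseteq> z \<and> y \<sqsubseteq> z"
proof
  assume A: "x \<in> A" "y \<in> A" "z \<in> A" and le: "join x y \<sqsubseteq> z"
  show "x \<sqsubseteq> z \<and> y \<sqsubseteq> z"
    using sl_le_trans[OF A(1) join_closed[OF A(1,2)] A(3) sl_le_join1[OF A(1,2)] le]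
      sl_le_trans[OF A(2) join_closed[OF A(1,2)] A(3) sl_le_join2[OF A(1,2)] le] ..
next
  assume "x \<in> A" "y \<in> A" "z \<in> A" "x \<sqsubseteq> z \<and> y \<sqsubseteq> z"
  then show "join x y \<sqsubseteq> z" using join_assoc[of x y z] by simp
qed

lemma finite_join_closed_has_greatest:
  assumes "finite X" "X \<noteq> {}" "X \<subseteq> A" and closed: "\<And>x y. x \<in> X \<Longrightarrow> y \<in> X \<Longrightarrow> join x y \<in> X"
  shows "\<exists>a\<in>X. \<forall>x\<in>X. x \<sqsubseteq> a"
proof -
  have "\<exists>a\<in>X. \<forall>y\<in>Y. y \<sqsubseteq> a" if "finite Y" "Y \<noteq> {}" "Y \<subseteq> X" for Y
    using that
  proof (induction Y rule: finite_ne_induct)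
    case (singleton y) then show ?case using sl_le_refl assms(3) by auto
  next
    case (insert y Y)
    then obtain a where a: "a \<in> X" "\<forall>z\<in>Y. z \<sqsubseteq> a" by auto
    have y: "y \<in> X" using insert.prems by simp
    have "z \<sqsubseteq> join a y" if "z \<in> insert y Y" for z
    proof (cases "z = y")
      case True then show ?thesis using sl_le_join2 a(1) y assms(3) by blast
    next
      case False
      then have "z \<in> Y" "z \<sqsubseteq> a" using that a(2) by auto
      then show ?thesis
        using sl_le_trans[of z a "join a y"] sl_le_join1[of a y] join_closed a(1) y insert.prems assms(3)
        by blast
    qed
    then show ?case using closed[OF a(1) y] by blast
  qed
  then show ?thesis using assms by blast
qed

end

lemma fin_join_sl_iff: "fin_join_sl L j one \<longleftrightarrow> finite L \<and> semilattice_top_on L j one"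
  unfolding fin_join_sl_def semilattice_top_on_def by meson

locale admissible_subsemiring = semilattice_top_on L j one
  for L :: "'l set" and j and one +
  fixes R :: "('l \<Rightarrow> 'l) set"
  assumes admissible: "admissible L j one R"
begin

(* The infix syntax of le is lost when the locale parameters are renamed. *)
notation le (infix "\<sqsubseteq>" 50)

lemma finite_L: "finite L"
  and exists_ne_one: "\<exists>x\<in>L. x \<noteq> one"
  and sl_star_L: "sl_star L j"
  and R_nonempty: "R \<noteq> {}"
  and fjoin_closed: "f \<in> R \<Longrightarrow> g \<in> R \<Longrightarrow> fjoin L j f g \<in> R"
  and fcomp_closed: "f \<in> R \<Longrightarrow> g \<in> R \<Longrightarrow> fcomp L f g \<in> R"
  and fab_in_R: "a \<in> L \<Longrightarrow> a \<noteq> one \<Longrightarrow> b \<in> L \<Longrightarrow> fab L j one a b \<in> R"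
  and exists_fab_below: "f \<in> R \<Longrightarrow> \<exists>a\<in>L - {one}. \<exists>b\<in>L. \<forall>x\<in>L. fab L j one a b x \<sqsubseteq> f x"
  using admissible by (auto simp: admissible_def fin_join_sl_def sl_le_def)

lemma R_extensional: "f \<in> R \<Longrightarrow> f \<in> extensional L"
  and R_apply_closed: "f \<in> R \<Longrightarrow> x \<in> L \<Longrightarrow> f x \<in> L"
  and R_join_hom: "f \<in> R \<Longrightarrow> x \<in> L \<Longrightarrow> y \<in> L \<Longrightarrow> f (j x y) = j (f x) (f y)"
  and R_fixes_one: "f \<in> R \<Longrightarrow> f one = one"
  using admissible by (auto simp: admissible_def JM1_def)

lemma fab_apply_le: "x \<in> L \<Longrightarrow> fab L j one a b x = (if x \<sqsubseteq> a then b else one)"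
  by (simp add: fab_apply sl_le_def)

lemma R_ext: "f \<in> R \<Longrightarrow> g \<in> R \<Longrightarrow> (\<And>x. x \<in> L \<Longrightarrow> f x = g x) \<Longrightarrow> f = g"
  by (blast intro: extensionalityI R_extensional)

definition const_one :: "'l \<Rightarrow> 'l" where
  "const_one = restrict (\<lambda>_. one) L"

lemma const_one_apply [simp]: "x \<in> L \<Longrightarrow> const_one x = one"
  by (simp add: const_one_def)

lemma fab_one_eq_const_one: "fab L j one a one = const_one"
  unfolding fab_def const_one_def by (rule restrict_ext) simp

lemma const_one_in_R: "const_one \<in> R"
  using exists_ne_one fab_in_R top_in fab_one_eq_const_one by metis

lemma finite_R: "finite R"
proof (rule finite_subset)
  show "R \<subseteq> PiE L (\<lambda>_. L)" using R_extensional R_apply_closed by (auto simp: PiE_def)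
  show "finite (PiE L (\<lambda>_. L))" using finite_L by (simp add: finite_PiE)
qed

lemma semiring_R: "semiring R (fjoin L j) (fcomp L)"
  unfolding semiring_def
proof (intro conjI ballI R_nonempty fjoin_closed fcomp_closed)
  fix f g h assume R: "f \<in> R" "g \<in> R" "h \<in> R"
  show "fjoin L j f g = fjoin L j g f"
    by (intro extensionalityI[OF fjoin_extensional fjoin_extensional]) (simp add: join_comm R_apply_closed R)
  show "fjoin L j (fjoin L j f g) h = fjoin L j f (fjoin L j g h)"
    by (intro extensionalityI[OF fjoin_extensional fjoin_extensional]) (simp add: join_assoc R_apply_closed R)
  show "fcomp L (fcomp L f g) h = fcomp L f (fcomp L g h)"
    by (intro extensionalityI[OF fcomp_extensional fcomp_extensional]) (simp add: R_apply_closed R)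
  show "fcomp L f (fjoin L j g h) = fjoin L j (fcomp L f g) (fcomp L f h)"
    by (intro extensionalityI[OF fcomp_extensional fjoin_extensional]) (simp add: R_apply_closed R_join_hom R)
  show "fcomp L (fjoin L j f g) h = fjoin L j (fcomp L f h) (fcomp L g h)"
    by (intro extensionalityI[OF fcomp_extensional fjoin_extensional]) (simp add: R_apply_closed R)
qed

lemma add_idempotent_R: "add_idempotent R (fjoin L j)"
  unfolding add_idempotent_def by (auto intro: R_ext fjoin_closed simp: join_idem R_apply_closed)

lemma fjoin_const_one: "f \<in> R \<Longrightarrow> fjoin L j f const_one = const_one"
  and const_one_fjoin: "f \<in> R \<Longrightarrow> fjoin L j const_one f = const_one"
  by (auto intro!: R_ext fjoin_closed const_one_in_R simp: join_top top_join R_apply_closed)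

lemma absorbing_greatest_R: "has_absorbing_greatest R (fjoin L j) (fcomp L)"
  unfolding has_absorbing_greatest_def
proof (intro bexI[OF _ const_one_in_R] conjI ballI fjoin_const_one)
  fix f assume f: "f \<in> R"
  show "fcomp L f const_one = const_one" "fcomp L const_one f = const_one"
    by (auto intro!: R_ext fcomp_closed f const_one_in_R simp: R_fixes_one[OF f] R_apply_closed[OF f])
qed

lemma fcomp_fab: "f \<in> R \<Longrightarrow> fcomp L f (fab L j one c p) = fab L j one c (f p)"
  by (intro extensionalityI[OF fcomp_extensional fab_extensional]) (simp add: fab_apply R_fixes_one)

text \<open>Precomposing with \<open>f\<^sub>c\<^sub>,\<^sub>x\<close> and postcomposing with \<open>f\<^sub>q\<^sub>,\<^sub>b\<close>, where \<open>q = h x\<close>,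
  turns \<open>f \<theta> h\<close> into \<open>f\<^sub>c\<^sub>,\<^sub>1 \<theta> f\<^sub>c\<^sub>,\<^sub>b\<close>.\<close>
lemma cong_relates_fab_const_one:
  assumes cong: "semiring_cong R (fjoin L j) (fcomp L) \<theta>"
    and fh: "(f, h) \<in> \<theta>" and x: "x \<in> L" and nle: "\<not> f x \<sqsubseteq> h x"
    and c: "c \<in> L" "c \<noteq> one" and b: "b \<in> L"
  shows "(fab L j one c b, const_one) \<in> \<theta>"
proof -
  have R: "f \<in> R" "h \<in> R" using fh cong by (auto simp: semiring_cong_def equiv_def)
  define p q where "p = f x" and "q = h x"
  have pq: "p \<in> L" "q \<in> L" "\<not> p \<sqsubseteq> q" using R x nle by (auto simp: p_def q_def R_apply_closed)
  have "q \<noteq> one" using pq join_top by blast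
  then have qb: "fab L j one q b \<in> R" using fab_in_R pq b by simp
  have "(fcomp L f (fab L j one c x), fcomp L h (fab L j one c x)) \<in> \<theta>"
    using semiring_cong_mul[OF cong fh semiring_cong_refl[OF cong fab_in_R[OF c x]]] .
  then have "(fab L j one c p, fab L j one c q) \<in> \<theta>"
    using fcomp_fab R by (simp add: p_def q_def)
  from semiring_cong_mul[OF cong semiring_cong_refl[OF cong qb] this]
  have "(fab L j one c (fab L j one q b p), fab L j one c (fab L j one q b q)) \<in> \<theta>"
    using fcomp_fab[OF qb] by simp
  then have "(fab L j one c one, fab L j one c b) \<in> \<theta>"
    using pq sl_le_refl by (simp add: fab_apply_le)
  then show ?thesis using semiring_cong_sym[OF cong] fab_one_eq_const_one by simp
qed

lemma cong_relates_const_one: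
  assumes cong: "semiring_cong R (fjoin L j) (fcomp L) \<theta>"
    and fabs: "\<And>a b. a \<in> L \<Longrightarrow> a \<noteq> one \<Longrightarrow> b \<in> L \<Longrightarrow> (fab L j one a b, const_one) \<in> \<theta>"
    and f: "f \<in> R"
  shows "(f, const_one) \<in> \<theta>"
proof -
  obtain a b where ab: "a \<in> L" "a \<noteq> one" "b \<in> L" "\<forall>x\<in>L. fab L j one a b x \<sqsubseteq> f x"
    using exists_fab_below[OF f] by blast
  have "fjoin L j (fab L j one a b) f = f"
    using ab by (intro extensionalityI[OF fjoin_extensional R_extensional[OF f]]) simp
  moreover have "(fjoin L j (fab L j one a b) f, fjoin L j const_one f) \<in> \<theta>"
    using semiring_cong_add[OF cong fabs[OF ab(1-3)] semiring_cong_refl[OF cong f]] .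
  ultimately show ?thesis using const_one_fjoin[OF f] by simp
qed

lemma simple_R: "simple_semiring R (fjoin L j) (fcomp L)"
  unfolding simple_semiring_def
proof (intro conjI allI impI semiring_R)
  fix \<theta> assume cong: "semiring_cong R (fjoin L j) (fcomp L) \<theta>"
  show "\<theta> = Id_on R \<or> \<theta> = R \<times> R"
  proof (cases "\<theta> = Id_on R")
    case False
    moreover have "f = h" if "f \<in> R" "h \<in> R" "\<forall>x\<in>L. f x \<sqsubseteq> h x" "\<forall>x\<in>L. h x \<sqsubseteq> f x" for f h
      using that by (intro R_ext) (auto intro: sl_le_antisym R_apply_closed)
    ultimately obtain f h where fh: "(f, h) \<in> \<theta>" "\<not> (\<forall>x\<in>L. f x \<sqsubseteq> h x)"
      by (rule equiv_neq_Id_onE[OF semiring_cong_equiv[OF cong], where P = "\<lambda>f h. \<forall>x\<in>L. f x \<sqsubseteq> h x"])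
    then obtain x where x: "x \<in> L" "\<not> f x \<sqsubseteq> h x" by blast
    have "(g, const_one) \<in> \<theta>" if "g \<in> R" for g
      using cong_relates_const_one[OF cong cong_relates_fab_const_one[OF cong fh(1) x] that] .
    then have "\<theta> = R \<times> R" by (rule equiv_eq_TimesI[OF semiring_cong_equiv[OF cong]])
    then show ?thesis ..
  qed simp
qed

lemma semimodule_L: "semimodule R (fjoin L j) (fcomp L) L j (\<lambda>f x. f x)"
  unfolding semimodule_def
  using join_assoc by (auto simp: semiring_R join_closed join_comm R_apply_closed R_join_hom)

lemma not_quasitrivial_L: "\<not> quasitrivial R L (\<lambda>f x. f x)"
proof -
  obtain a where a: "a \<in> L" "a \<noteq> one" using exists_ne_one by blast
  then have "fab L j one a a a \<noteq> const_one a" using sl_le_refl by (simp add: fab_apply_le)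
  then show ?thesis unfolding quasitrivial_def using a fab_in_R const_one_in_R by metis
qed

text \<open>A subsemimodule containing some \<open>x \<noteq> 1\<close> contains \<open>f\<^sub>x\<^sub>,\<^sub>b x = b\<close> for every \<open>b\<close>.\<close>
lemma sub_irreducible_L: "sub_irreducible R (fjoin L j) (fcomp L) L j (\<lambda>f x. f x)"
  unfolding sub_irreducible_def
proof (intro conjI allI impI semimodule_L not_quasitrivial_L)
  fix N assume N: "subsemimodule R L j (\<lambda>f x. f x) N \<and> N \<noteq> L"
  then have NL: "N \<subseteq> L" and closed: "\<And>f x. f \<in> R \<Longrightarrow> x \<in> N \<Longrightarrow> f x \<in> N"
    by (auto simp: subsemimodule_def)
  have "x = one" if x: "x \<in> N" for x
  proof (rule ccontr)
    assume "x \<noteq> one"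
    then have "fab L j one x b x \<in> N" if "b \<in> L" for b
      using closed[OF fab_in_R x] that x NL by auto
    then have "L \<subseteq> N" using x NL sl_le_refl by (auto simp: fab_apply_le)
    then show False using N NL by auto
  qed
  then show "id_quasitrivial R N (\<lambda>f x. f x)"
    unfolding id_quasitrivial_def using R_fixes_one by auto
qed

lemma quot_irreducible_L: "quot_irreducible R (fjoin L j) (fcomp L) L j (\<lambda>f x. f x)"
  unfolding quot_irreducible_def
proof (intro conjI allI impI semimodule_L not_quasitrivial_L)
  fix \<theta> assume cong: "smod_cong R L j (\<lambda>f x. f x) \<theta>"
  have eq: "equiv L \<theta>" and act: "\<And>f x y. f \<in> R \<Longrightarrow> (x, y) \<in> \<theta> \<Longrightarrow> (f x, f y) \<in> \<theta>"
    using cong by (simp_all add: smod_cong_def)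
  show "\<theta> = Id_on L \<or> \<theta> = L \<times> L"
  proof (cases "\<theta> = Id_on L")
    case False
    with eq obtain p q where pq: "(p, q) \<in> \<theta>" "\<not> p \<sqsubseteq> q"
      by (rule equiv_neq_Id_onE) (rule sl_le_antisym)
    have L: "p \<in> L" "q \<in> L" using pq eq by (auto simp: equiv_def)
    then have "q \<noteq> one" using pq join_top by blast
    then have "(b, one) \<in> \<theta>" if "b \<in> L" for b
      using act[OF fab_in_R[OF L(2) _ that] pq(1)] L pq(2) sl_le_refl eq
      by (auto simp: fab_apply_le equiv_def sym_def)
    then show ?thesis using equiv_eq_TimesI[OF eq] by blast
  qed simp
qed

lemma smod_idempotent_L: "smod_idempotent L j"
  by (simp add: smod_idempotent_def join_idem)

end

theorem admissible_imp_simple_semiring_with_irreducible_module: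
  fixes L :: "'l set"
  assumes "admissible L j one R"
  shows "finite R \<and> simple_semiring R (fjoin L j) (fcomp L) \<and>
    add_idempotent R (fjoin L j) \<and> has_absorbing_greatest R (fjoin L j) (fcomp L) \<and>
    (\<exists>(M :: 'l set) madd act.
       semimodule R (fjoin L j) (fcomp L) M madd act \<and> smod_idempotent M madd \<and>
       irreducible_smod R (fjoin L j) (fcomp L) M madd act \<and> sl_star M madd)"
proof -
  interpret admissible_subsemiring L j one R
    using assms by unfold_locales (auto simp: admissible_def fin_join_sl_iff semilattice_top_on_def)
  show ?thesis
    using finite_R simple_R add_idempotent_R absorbing_greatest_R semimodule_L smod_idempotent_L
      sub_irreducible_L quot_irreducible_L sl_star_L
    unfolding irreducible_smod_def by blast
qed

locale idem_irreducible_smod = semilattice_top_on M madd g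
  for M :: "'m set" and madd and g +
  fixes S :: "'s set" and add mul and act :: "'s \<Rightarrow> 'm \<Rightarrow> 'm" and ob :: 's
  assumes semimodule: "semimodule S add mul M madd act"
    and irreducible: "irreducible_smod S add mul M madd act"
    and finite_M: "finite M"
    and ob_in: "ob \<in> S"
    and ob_greatest: "\<And>s. s \<in> S \<Longrightarrow> add s ob = ob"
    and ob_absorbing: "\<And>s. s \<in> S \<Longrightarrow> mul s ob = ob \<and> mul ob s = ob"
begin

notation le (infix "\<sqsubseteq>" 50)

lemma semiring_S: "semiring S add mul"
  using semimodule by (simp add: semimodule_def)

lemma S_nonempty: "S \<noteq> {}"
  and add_closed: "r \<in> S \<Longrightarrow> s \<in> S \<Longrightarrow> add r s \<in> S"
  and mul_closed: "r \<in> S \<Longrightarrow> s \<in> S \<Longrightarrow> mul r s \<in> S"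
  using semiring_S by (auto simp: semiring_def)

lemma act_closed: "r \<in> S \<Longrightarrow> x \<in> M \<Longrightarrow> act r x \<in> M"
  and act_mul: "r \<in> S \<Longrightarrow> s \<in> S \<Longrightarrow> x \<in> M \<Longrightarrow> act r (act s x) = act (mul r s) x"
  and act_add: "r \<in> S \<Longrightarrow> s \<in> S \<Longrightarrow> x \<in> M \<Longrightarrow> act (add r s) x = madd (act r x) (act s x)"
  and act_join: "r \<in> S \<Longrightarrow> x \<in> M \<Longrightarrow> y \<in> M \<Longrightarrow> act r (madd x y) = madd (act r x) (act r y)"
  using semimodule by (auto simp: semimodule_def)

lemma act_mono: "s \<in> S \<Longrightarrow> x \<in> M \<Longrightarrow> y \<in> M \<Longrightarrow> x \<sqsubseteq> y \<Longrightarrow> act s x \<sqsubseteq> act s y"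
  using act_join[of s x y] by simp

lemma not_quasitrivial: "\<not> quasitrivial S M act"
  using irreducible by (simp add: irreducible_smod_def sub_irreducible_def)

lemma smod_cong_cases: "smod_cong S M madd act \<theta> \<Longrightarrow> \<theta> = Id_on M \<or> \<theta> = M \<times> M"
  using irreducible by (simp add: irreducible_smod_def quot_irreducible_def)

lemma proper_subsemimodule_id_quasitrivial:
  "subsemimodule S M madd act N \<Longrightarrow> N \<noteq> M \<Longrightarrow> id_quasitrivial S N act"
  using irreducible by (simp add: irreducible_smod_def sub_irreducible_def)

lemma act_ob_constant: "\<exists>c\<in>M. \<forall>x\<in>M. act ob x = c"
proof -
  have cong: "smod_cong S M madd act (Restr (kernel (act ob)) M)"
    by (rule smod_cong_kernelI[OF join_closed act_closed]) (simp_all add: act_join ob_in act_mul ob_absorbing)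
  show ?thesis
  proof (cases "Restr (kernel (act ob)) M = Id_on M")
    case True
    have "act r x = x" if "r \<in> S" "x \<in> M" for r x
      using inj_on_if_Restr_kernel_eq_Id_on[OF True] that act_closed act_mul ob_in ob_absorbing
      by (simp add: inj_on_def)
    then have "quasitrivial S M act" by (simp add: quasitrivial_def)
    then show ?thesis using not_quasitrivial by simp
  next
    case False
    then have "Restr (kernel (act ob)) M = M \<times> M" using smod_cong_cases[OF cong] by simp
    then show ?thesis using Restr_kernel_eq_TimesD top_in act_closed ob_in by metis
  qed
qed

lemma act_le_act_ob: "s \<in> S \<Longrightarrow> x \<in> M \<Longrightarrow> act s x \<sqsubseteq> act ob x"
  using act_add[OF _ ob_in] ob_greatest by metis

text \<open>The constant value \<open>c\<close> of \<open>ob\<close> bounds every \<open>act s x\<close>, so \<open>x \<mapsto> x + c\<close>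
  induces a congruence; it cannot be the identity since \<open>M\<close> is not quasitrivial.\<close>
lemma act_ob: assumes x: "x \<in> M" shows "act ob x = g"
proof -
  obtain c where c: "c \<in> M" "\<And>x. x \<in> M \<Longrightarrow> act ob x = c" using act_ob_constant by blast
  have below: "act s x \<sqsubseteq> c" if "s \<in> S" "x \<in> M" for s x using act_le_act_ob that c by metis
  have cong: "smod_cong S M madd act (Restr (kernel (\<lambda>x. madd x c)) M)"
  proof (rule smod_cong_kernelI[OF join_closed act_closed])
    fix a b e d assume h: "a \<in> M" "b \<in> M" "e \<in> M" "d \<in> M" "madd a c = madd b c" "madd e c = madd d c"
    have "madd (madd a e) c = madd (madd a c) (madd e c)" if "a \<in> M" "e \<in> M" for a e
      using that c by (metis join_assoc join_comm join_idem join_closed)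
    then show "madd (madd a e) c = madd (madd b d) c" using h by metis
  next
    fix r a b assume "r \<in> S" "a \<in> M" "b \<in> M"
    then show "madd (act r a) c = madd (act r b) c" using below by simp
  qed
  have "c = g"
  proof (cases "Restr (kernel (\<lambda>x. madd x c)) M = Id_on M")
    case True
    have "act r x = c" if "r \<in> S" "x \<in> M" for r x
      using inj_on_if_Restr_kernel_eq_Id_on[OF True] below[OF that] that c act_closed join_idem
      by (simp add: inj_on_def)
    then have "quasitrivial S M act" by (simp add: quasitrivial_def)
    then show ?thesis using not_quasitrivial by simp
  next
    case False
    then have "Restr (kernel (\<lambda>x. madd x c)) M = M \<times> M" using smod_cong_cases[OF cong] by simp
    then have "madd c c = madd g c" using Restr_kernel_eq_TimesD c top_in by metis
    then show ?thesis using join_idem c top_join by metis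
  qed
  then show ?thesis using c x by simp
qed

lemma act_top: "s \<in> S \<Longrightarrow> act s g = g"
  by (metis act_mul top_in act_ob ob_in ob_absorbing)

lemma exists_ne_top: "\<exists>x\<in>M. x \<noteq> g"
proof (rule ccontr)
  assume "\<not> ?thesis"
  then have "quasitrivial S M act" using act_top by (auto simp: quasitrivial_def)
  then show False using not_quasitrivial by simp
qed

text \<open>The elements annihilated by \<open>S\<close> form a proper subsemimodule, on which \<open>ob\<close> then acts
  as the identity.\<close>
lemma annihilated_eq_top:
  assumes x: "x \<in> M" "\<And>s. s \<in> S \<Longrightarrow> act s x = g"
  shows "x = g"
proof -
  define Z where "Z = {x\<in>M. \<forall>s\<in>S. act s x = g}"
  have sub: "subsemimodule S M madd act Z"
    unfolding subsemimodule_def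
  proof (intro conjI ballI)
    show "Z \<noteq> {}" "Z \<subseteq> M" using top_in act_top by (auto simp: Z_def)
  next
    fix x y assume "x \<in> Z" "y \<in> Z"
    then show "madd x y \<in> Z" using join_closed act_join join_idem[OF top_in] by (simp add: Z_def)
  next
    fix r x assume r: "r \<in> S" and "x \<in> Z"
    then have x: "x \<in> M" "\<And>s. s \<in> S \<Longrightarrow> act s x = g" by (auto simp: Z_def)
    have "act s (act r x) = g" if "s \<in> S" for s
      using act_mul[OF that r x(1)] x mul_closed[OF that r] by simp
    then show "act r x \<in> Z" using act_closed r x top_in by (simp add: Z_def)
  qed
  show ?thesis
  proof (cases "Z = M")
    case True
    then have "\<forall>x\<in>M. \<forall>s\<in>S. act s x = g" by (auto simp: Z_def)
    then have "quasitrivial S M act" by (simp add: quasitrivial_def)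
    then show ?thesis using not_quasitrivial by simp
  next
    case False
    then have "act ob x = x"
      using proper_subsemimodule_id_quasitrivial[OF sub] x ob_in by (auto simp: id_quasitrivial_def Z_def)
    then show ?thesis using act_ob x by simp
  qed
qed

text \<open>If the subsemimodule \<open>S x\<close> is proper, \<open>ob\<close> fixes it pointwise, so \<open>S x = {g}\<close>.\<close>
lemma act_transitive:
  assumes x: "x \<in> M" "x \<noteq> g" and y: "y \<in> M"
  shows "\<exists>s\<in>S. act s x = y"
proof -
  define Sx where "Sx = (\<lambda>s. act s x) ` S"
  have sub: "subsemimodule S M madd act Sx"
    unfolding subsemimodule_def
  proof (intro conjI ballI)
    show "Sx \<noteq> {}" "Sx \<subseteq> M" using S_nonempty act_closed x by (auto simp: Sx_def)
  next
    fix a b assume "a \<in> Sx" "b \<in> Sx"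
    then show "madd a b \<in> Sx" using act_add x add_closed by (auto simp: Sx_def image_iff) metis
  next
    fix r a assume "r \<in> S" "a \<in> Sx"
    then show "act r a \<in> Sx" using act_mul x mul_closed by (auto simp: Sx_def)
  qed
  show ?thesis
  proof (cases "Sx = M")
    case True then show ?thesis using y by (auto simp: Sx_def)
  next
    case False
    have "act ob (act s x) = act s x" if "s \<in> S" for s
      using proper_subsemimodule_id_quasitrivial[OF sub False] that ob_in
      by (auto simp: id_quasitrivial_def Sx_def)
    then have "act s x = g" if "s \<in> S" for s using that act_ob act_closed x by metis
    then show ?thesis using annihilated_eq_top x by blast
  qed
qed

text \<open>For \<open>a \<noteq> g\<close>, the map \<open>z \<mapsto> {s. s z \<sqsubseteq> a}\<close> induces a congruence separating \<open>a\<close>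
  from \<open>g\<close>; by quotient irreducibility it separates all points.\<close>
lemma separation:
  assumes a: "a \<in> M" "a \<noteq> g" and z: "z \<in> M" "z' \<in> M" "z \<noteq> z'"
  shows "\<exists>s\<in>S. \<not> (act s z \<sqsubseteq> a \<longleftrightarrow> act s z' \<sqsubseteq> a)"
proof -
  define f where "f z = {s\<in>S. act s z \<sqsubseteq> a}" for z
  have f_join: "f (madd x c) = f x \<inter> f c" if "x \<in> M" "c \<in> M" for x c
    using that act_join sl_join_le_iff act_closed a(1) by (auto simp: f_def)
  have f_act: "f (act r x) = {s \<in> S. mul s r \<in> f x}" if "r \<in> S" "x \<in> M" for r x
    using that act_mul mul_closed by (auto simp: f_def)
  have cong: "smod_cong S M madd act (Restr (kernel f) M)"
    by (rule smod_cong_kernelI[OF join_closed act_closed]) (simp_all add: f_join f_act)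
  obtain s where s: "s \<in> S" "act s a = a" using act_transitive[OF a(1) a(2) a(1)] by blast
  have "s \<in> f a" using s a sl_le_refl by (simp add: f_def)
  moreover have "s \<notin> f g" using s act_top sl_top_le_eq a by (auto simp: f_def)
  ultimately have "Restr (kernel f) M \<noteq> M \<times> M" using a top_in by (auto simp: kernel_def)
  then have "inj_on f M" using smod_cong_cases[OF cong] inj_on_if_Restr_kernel_eq_Id_on by blast
  then have "f z \<noteq> f z'" using z by (auto simp: inj_on_def)
  then show ?thesis unfolding f_def by blast
qed

lemma exists_act_below_excluding:
  assumes a: "a \<in> M" "a \<noteq> g" and a': "a' \<in> M" "a' \<noteq> g" and x: "x \<in> M" "\<not> x \<sqsubseteq> a'"
  shows "\<exists>s\<in>S. act s a' \<sqsubseteq> a \<and> \<not> act s x \<sqsubseteq> a"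
proof -
  have "a' \<noteq> madd a' x" using x a' join_comm by metis
  then obtain s where s: "s \<in> S" "\<not> (act s a' \<sqsubseteq> a \<longleftrightarrow> act s (madd a' x) \<sqsubseteq> a)"
    using separation[OF a a'(1) join_closed[OF a'(1) x(1)]] by blast
  moreover have "act s (madd a' x) \<sqsubseteq> a \<longleftrightarrow> act s a' \<sqsubseteq> a \<and> act s x \<sqsubseteq> a"
    using act_join sl_join_le_iff s a a' x act_closed by simp
  ultimately show ?thesis by blast
qed

lemma dual_transitive:
  assumes a: "a \<in> M" "a \<noteq> g" and a': "a' \<in> M" "a' \<noteq> g"
  shows "\<exists>s\<in>S. \<forall>x\<in>M. act s x \<sqsubseteq> a \<longleftrightarrow> x \<sqsubseteq> a'"
proof -
  have excl: "\<exists>s\<in>S. act s a' \<sqsubseteq> a \<and> (\<forall>x\<in>X. \<not> act s x \<sqsubseteq> a)"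
    if "finite X" "X \<subseteq> {x\<in>M. \<not> x \<sqsubseteq> a'}" for X
    using that
  proof (induction X rule: finite_induct)
    case empty
    obtain s where "s \<in> S" "act s a' = a" using act_transitive[OF a' a(1)] by blast
    then show ?case using sl_le_refl a by auto
  next
    case (insert x X)
    then obtain s where s: "s \<in> S" "act s a' \<sqsubseteq> a" "\<forall>y\<in>X. \<not> act s y \<sqsubseteq> a" by auto
    obtain t where t: "t \<in> S" "act t a' \<sqsubseteq> a" "\<not> act t x \<sqsubseteq> a"
      using exists_act_below_excluding[OF a a'] insert.prems by auto
    have iff: "act (add s t) y \<sqsubseteq> a \<longleftrightarrow> act s y \<sqsubseteq> a \<and> act t y \<sqsubseteq> a" if "y \<in> M" for y
      using that s t act_add sl_join_le_iff act_closed a by simp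
    have "act (add s t) a' \<sqsubseteq> a" using iff a' s t by simp
    moreover have "\<not> act (add s t) y \<sqsubseteq> a" if "y \<in> insert x X" for y
      using that iff s t insert.prems by auto
    ultimately show ?case by (intro bexI[OF _ add_closed[OF s(1) t(1)]] conjI ballI)
  qed
  obtain s where s: "s \<in> S" "act s a' \<sqsubseteq> a" "\<forall>x\<in>{x\<in>M. \<not> x \<sqsubseteq> a'}. \<not> act s x \<sqsubseteq> a"
    using excl[of "{x\<in>M. \<not> x \<sqsubseteq> a'}"] finite_M by auto
  have "act s x \<sqsubseteq> a" if "x \<in> M" "x \<sqsubseteq> a'" for x
    using sl_le_trans[OF act_closed[OF s(1) that(1)] act_closed[OF s(1) a'(1)] a(1)]
      act_mono[OF s(1) that(1) a'(1) that(2)] s(2) by blast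
  then show ?thesis using s by blast
qed

definition support :: "'s \<Rightarrow> 'm set" where
  "support t = {x\<in>M. act t x \<noteq> g}"

lemma support_mul_subset: "s \<in> S \<Longrightarrow> t \<in> S \<Longrightarrow> support (mul s t) \<subseteq> support t"
  unfolding support_def using act_mul act_top by fastforce

lemma exists_nonempty_support: "\<exists>t\<in>S. support t \<noteq> {}"
proof -
  obtain x where x: "x \<in> M" "x \<noteq> g" using exists_ne_top by blast
  obtain s where "s \<in> S" "act s x = x" using act_transitive[OF x x(1)] by blast
  then have "x \<in> support s" using x by (simp add: support_def)
  then show ?thesis using \<open>s \<in> S\<close> by blast
qed

definition above_fab :: "'s set" where
  "above_fab = {s\<in>S. \<exists>a\<in>M. a \<noteq> g \<and> (\<exists>b\<in>M. \<forall>x\<in>M. (if x \<sqsubseteq> a then b else g) \<sqsubseteq> act s x)}"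

lemma above_fab_add: assumes s: "s \<in> above_fab" and r: "r \<in> S" shows "add s r \<in> above_fab"
proof -
  obtain a b where ab: "a \<in> M" "a \<noteq> g" "b \<in> M" "\<forall>x\<in>M. (if x \<sqsubseteq> a then b else g) \<sqsubseteq> act s x"
    and sS: "s \<in> S" using s by (auto simp: above_fab_def)
  have "(if x \<sqsubseteq> a then b else g) \<sqsubseteq> act (add s r) x" if x: "x \<in> M" for x
    using sl_le_trans[OF _ act_closed[OF sS x] _ ab(4)[rule_format, OF x]
        sl_le_join1[OF act_closed[OF sS x] act_closed[OF r x]]]
      act_add[OF sS r x] ab top_in act_closed[OF add_closed[OF sS r] x] by simp
  then show ?thesis using ab add_closed[OF sS r] unfolding above_fab_def by blast
qed

lemma above_fab_mul_left: assumes s: "s \<in> above_fab" and r: "r \<in> S" shows "mul r s \<in> above_fab"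
proof -
  obtain a b where ab: "a \<in> M" "a \<noteq> g" "b \<in> M" "\<forall>x\<in>M. (if x \<sqsubseteq> a then b else g) \<sqsubseteq> act s x"
    and sS: "s \<in> S" using s by (auto simp: above_fab_def)
  have "(if x \<sqsubseteq> a then act r b else g) \<sqsubseteq> act (mul r s) x" if x: "x \<in> M" for x
  proof -
    have "act r (if x \<sqsubseteq> a then b else g) \<sqsubseteq> act r (act s x)"
      using act_mono[OF r _ act_closed[OF sS x] ab(4)[rule_format, OF x]] ab(3) top_in by simp
    then show ?thesis using act_mul[OF r sS x] act_top[OF r] by (simp split: if_splits)
  qed
  then show ?thesis using ab mul_closed[OF r sS] act_closed[OF r ab(3)] unfolding above_fab_def by blast
qed

text \<open>With \<open>a'\<close> the greatest element of \<open>r\<^sup>-\<^sup>1(\<down>a)\<close>, \<open>f\<^sub>a\<^sub>'\<^sub>,\<^sub>b \<sqsubseteq> s r\<close> whenever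
  \<open>f\<^sub>a\<^sub>,\<^sub>b \<sqsubseteq> s\<close>; if \<open>r\<^sup>-\<^sup>1(\<down>a)\<close> is empty, \<open>s r\<close> is the constant \<open>g\<close>.\<close>
lemma above_fab_mul_right: assumes s: "s \<in> above_fab" and r: "r \<in> S" shows "mul s r \<in> above_fab"
proof -
  obtain a b where ab: "a \<in> M" "a \<noteq> g" "b \<in> M" "\<forall>x\<in>M. (if x \<sqsubseteq> a then b else g) \<sqsubseteq> act s x"
    and sS: "s \<in> S" using s by (auto simp: above_fab_def)
  have srS: "mul s r \<in> S" using mul_closed sS r by simp
  define A where "A = {x\<in>M. act r x \<sqsubseteq> a}"
  have outside_A: "act (mul s r) x = g" if x: "x \<in> M" "x \<notin> A" for x
  proof -
    have "g \<sqsubseteq> act s (act r x)" using ab(4)[rule_format, OF act_closed[OF r x(1)]] x by (simp add: A_def)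
    then show ?thesis using sl_top_le_eq act_closed sS r x act_mul[OF sS r x(1)] by metis
  qed
  show ?thesis
  proof (cases "A = {}")
    case True
    obtain a2 where a2: "a2 \<in> M" "a2 \<noteq> g" using exists_ne_top by blast
    have "(if x \<sqsubseteq> a2 then g else g) \<sqsubseteq> act (mul s r) x" if x: "x \<in> M" for x
      using outside_A[OF x] True join_idem top_in by simp
    then show ?thesis using srS a2 top_in unfolding above_fab_def by blast
  next
    case False
    have "act r (madd x y) \<sqsubseteq> a" if "x \<in> A" "y \<in> A" for x y
      using that act_join[OF r] sl_join_le_iff act_closed[OF r] ab(1) by (simp add: A_def)
    then obtain a' where a': "a' \<in> A" "\<forall>x\<in>A. x \<sqsubseteq> a'"
      using finite_join_closed_has_greatest[OF _ False] finite_M join_closed by (auto simp: A_def)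
    have a'M: "a' \<in> M" using a' by (simp add: A_def)
    have "a' \<noteq> g" using a' act_top[OF r] sl_top_le_eq ab by (auto simp: A_def)
    moreover have "(if x \<sqsubseteq> a' then b else g) \<sqsubseteq> act (mul s r) x" if x: "x \<in> M" for x
    proof (cases "x \<sqsubseteq> a'")
      case True
      have "act r x \<sqsubseteq> act r a'" using act_mono[OF r x a'M True] .
      moreover have "act r a' \<sqsubseteq> a" using a' by (simp add: A_def)
      ultimately have "act r x \<sqsubseteq> a" using sl_le_trans act_closed r x a'M ab(1) by blast
      then have "b \<sqsubseteq> act s (act r x)" using ab(4)[rule_format, OF act_closed[OF r x]] by simp
      then show ?thesis using True act_mul[OF sS r x] by simp
    next
      case False
      then have "x \<notin> A" using a' by auto
      then show ?thesis using False outside_A[OF x] join_idem top_in by simp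
    qed
    ultimately show ?thesis using srS a'M ab(3) unfolding above_fab_def by blast
  qed
qed

definition act_map :: "'s \<Rightarrow> 'm \<Rightarrow> 'm" where
  "act_map s = restrict (act s) M"

lemma act_map_apply: "x \<in> M \<Longrightarrow> act_map s x = act s x"
  by (simp add: act_map_def)

lemma act_map_add: "s \<in> S \<Longrightarrow> t \<in> S \<Longrightarrow> act_map (add s t) = fjoin M madd (act_map s) (act_map t)"
  unfolding fjoin_def act_map_def by (intro restrict_ext) (simp add: act_add)

lemma act_map_mul: "s \<in> S \<Longrightarrow> t \<in> S \<Longrightarrow> act_map (mul s t) = fcomp M (act_map s) (act_map t)"
  unfolding fcomp_def act_map_def by (intro restrict_ext) (simp add: act_mul act_closed)

lemma act_map_JM1: "s \<in> S \<Longrightarrow> act_map s \<in> JM1 M madd g"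
  unfolding JM1_def act_map_def using act_top top_in act_closed act_join join_closed by auto

end

locale idem_irreducible_smod_star = idem_irreducible_smod +
  fixes u
  assumes u_in: "u \<in> M"
    and u_star: "\<And>x. x \<in> M \<Longrightarrow> x \<noteq> g \<Longrightarrow> madd u x \<noteq> g"
begin

lemma u_ne_top: "u \<noteq> g"
  using exists_ne_top u_star top_join by metis

lemma sl_star_M: "sl_star M madd"
proof -
  have "\<forall>x\<in>M - {g}. g \<noteq> madd u x" using u_star by force
  then show ?thesis unfolding sl_star_def using finite_M top_in join_top u_in by blast
qed

text \<open>If every nonzero \<open>s t\<close> has the same support as \<open>t\<close>, that support is join-closed: send
  \<open>t x\<^sub>1\<close> to \<open>u\<close>; then \<open>s t x\<^sub>2 \<noteq> g\<close>, and \<open>u\<close> joins it to something \<open>\<noteq> g\<close> by (*).\<close>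
lemma support_join_closed:
  assumes t: "t \<in> S"
    and minimal: "\<And>s. s \<in> S \<Longrightarrow> support (mul s t) \<noteq> {} \<Longrightarrow> support (mul s t) = support t"
    and x: "x1 \<in> support t" "x2 \<in> support t"
  shows "madd x1 x2 \<in> support t"
proof -
  have x1: "x1 \<in> M" "act t x1 \<noteq> g" and x2: "x2 \<in> M" "act t x2 \<noteq> g"
    using x by (auto simp: support_def)
  obtain s where s: "s \<in> S" "act s (act t x1) = u"
    using act_transitive[OF act_closed[OF t x1(1)] x1(2) u_in] by blast
  have "x1 \<in> support (mul s t)" using s x1 act_mul t u_ne_top by (simp add: support_def)
  then have "x2 \<in> support (mul s t)" using minimal[OF s(1)] x by auto
  then have v: "act s (act t x2) \<noteq> g" "act s (act t x2) \<in> M"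
    using act_mul[OF s(1) t x2(1)] act_closed[OF s(1) act_closed[OF t x2(1)]] by (auto simp: support_def)
  have "act s (act t (madd x1 x2)) = madd u (act s (act t x2))"
    using act_join x1 x2 t s act_closed by simp
  then have "act s (act t (madd x1 x2)) \<noteq> g" using u_star[OF v(2) v(1)] by simp
  then have "act t (madd x1 x2) \<noteq> g" using act_top s by auto
  then show ?thesis using join_closed x1 x2 by (simp add: support_def)
qed

lemma exists_principal_support: "\<exists>t\<in>S. \<exists>a\<in>M. a \<noteq> g \<and> (\<forall>x\<in>M. act t x \<noteq> g \<longleftrightarrow> x \<sqsubseteq> a)"
proof -
  have fin: "finite (support s)" for s using finite_M by (simp add: support_def)
  obtain t0 where t0: "t0 \<in> S \<and> support t0 \<noteq> {}" using exists_nonempty_support by blast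
  obtain t where t: "t \<in> S" "support t \<noteq> {}"
    and least: "\<And>s. s \<in> S \<and> support s \<noteq> {} \<Longrightarrow> card (support t) \<le> card (support s)"
    using ex_has_least_nat[of "\<lambda>t. t \<in> S \<and> support t \<noteq> {}" t0 "\<lambda>t. card (support t)", OF t0] by blast
  have minimal: "support (mul s t) = support t" if "s \<in> S" "support (mul s t) \<noteq> {}" for s
    using card_subset_eq[OF fin support_mul_subset[OF that(1) t(1)]] least[of "mul s t"]
      card_mono[OF fin support_mul_subset[OF that(1) t(1)]] mul_closed[OF that(1) t(1)] that(2)
    by fastforce
  obtain a where a: "a \<in> support t" "\<forall>x\<in>support t. x \<sqsubseteq> a"
    using finite_join_closed_has_greatest[OF fin t(2)] support_join_closed[OF t(1) minimal]
    by (auto simp: support_def)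
  have aM: "a \<in> M" "act t a \<noteq> g" using a by (auto simp: support_def)
  have "act t x \<noteq> g \<longleftrightarrow> x \<sqsubseteq> a" if x: "x \<in> M" for x
  proof
    assume "x \<sqsubseteq> a"
    then have "act t x \<sqsubseteq> act t a" using act_mono t(1) x aM by simp
    then show "act t x \<noteq> g" using aM sl_top_le_eq act_closed t(1) by metis
  qed (use a x in \<open>auto simp: support_def\<close>)
  moreover have "a \<noteq> g" using aM act_top t(1) by auto
  ultimately show ?thesis using t(1) aM(1) by blast
qed

lemma exists_support_downset:
  assumes p: "p \<in> M" "p \<noteq> g"
  shows "\<exists>h\<in>S. \<forall>x\<in>M. act h x \<noteq> g \<longleftrightarrow> x \<sqsubseteq> p"
proof -
  obtain t a where t: "t \<in> S" "a \<in> M" "a \<noteq> g" "\<forall>x\<in>M. act t x \<noteq> g \<longleftrightarrow> x \<sqsubseteq> a"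
    using exists_principal_support by blast
  obtain r where r: "r \<in> S" "\<forall>x\<in>M. act r x \<sqsubseteq> a \<longleftrightarrow> x \<sqsubseteq> p"
    using dual_transitive[OF t(2,3) p] by blast
  have "act (mul t r) x \<noteq> g \<longleftrightarrow> x \<sqsubseteq> p" if x: "x \<in> M" for x
    using act_mul[OF t(1) r(1) x, symmetric] t(4) r(2) act_closed[OF r(1) x] x by simp
  then show ?thesis using mul_closed t r by blast
qed

text \<open>Composing with a map supported exactly on \<open>\<down>p\<close> would otherwise shrink the image.\<close>
lemma image_minimal_unique_nontop:
  assumes t: "t \<in> S" "support t \<noteq> {}"
    and least: "\<And>s. s \<in> S \<Longrightarrow> support s \<noteq> {} \<Longrightarrow> card (act t ` M) \<le> card (act s ` M)"
    and pq: "p \<in> act t ` M" "q \<in> act t ` M" "p \<noteq> g" "q \<noteq> g"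
  shows "p = q"
proof (rule ccontr)
  have imgM: "act t ` M \<subseteq> M" using act_closed t(1) by auto
  have fin: "finite (act t ` M)" using finite_M by simp
  assume "p \<noteq> q"
  moreover have "p \<in> M" "q \<in> M" using pq imgM by auto
  ultimately have "\<not> q \<sqsubseteq> p \<or> \<not> p \<sqsubseteq> q" using sl_le_antisym by blast
  then obtain p q where pq: "p \<in> act t ` M" "q \<in> act t ` M" "p \<noteq> g" "q \<noteq> g" "\<not> q \<sqsubseteq> p"
    using pq by blast
  have M: "p \<in> M" "q \<in> M" using pq imgM by auto
  obtain h where h: "h \<in> S" "\<forall>x\<in>M. act h x \<noteq> g \<longleftrightarrow> x \<sqsubseteq> p"
    using exists_support_downset[OF M(1) pq(3)] by blast
  obtain x0 where x0: "x0 \<in> M" "p = act t x0" using pq(1) by blast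
  have "act h p \<noteq> g" using h M sl_le_refl by simp
  then have "x0 \<in> support (mul h t)" using x0 act_mul h t(1) by (simp add: support_def)
  then have "card (act t ` M) \<le> card (act (mul h t) ` M)"
    using least[of "mul h t"] mul_closed h t(1) by blast
  also have "act (mul h t) ` M = act h ` act t ` M"
    unfolding image_image using act_mul h t(1) by simp
  finally have "inj_on (act h) (act t ` M)"
    using eq_card_imp_inj_on fin card_image_le[OF fin] le_antisym by metis
  moreover have "act h q = act h g" using h(2)[rule_format, OF M(2)] pq(5) act_top[OF h(1)] by simp
  moreover have "g \<in> act t ` M" using act_top[OF t(1)] top_in by force
  ultimately show False using pq(2,4) by (auto simp: inj_on_def)
qed

lemma exists_rank_one:
  "\<exists>t\<in>S. \<exists>a\<in>M. \<exists>b\<in>M. a \<noteq> g \<and> b \<noteq> g \<and> (\<forall>x\<in>M. act t x = (if x \<sqsubseteq> a then b else g))"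
proof -
  obtain t0 where t0: "t0 \<in> S \<and> support t0 \<noteq> {}" using exists_nonempty_support by blast
  obtain t where t: "t \<in> S" "support t \<noteq> {}"
    and least: "\<And>s. s \<in> S \<and> support s \<noteq> {} \<Longrightarrow> card (act t ` M) \<le> card (act s ` M)"
    using ex_has_least_nat[of "\<lambda>t. t \<in> S \<and> support t \<noteq> {}" t0 "\<lambda>t. card (act t ` M)", OF t0] by blast
  obtain x0 where x0: "x0 \<in> M" "act t x0 \<noteq> g" using t by (auto simp: support_def)
  define b where "b = act t x0"
  have b: "b \<in> M" "b \<noteq> g" using x0 act_closed t(1) by (auto simp: b_def)
  have two_valued: "act t x = b \<or> act t x = g" if "x \<in> M" for x
    using image_minimal_unique_nontop[OF t, of "act t x" b] least that x0 by (auto simp: b_def)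
  have "madd x1 x2 \<in> support t" if "x1 \<in> support t" "x2 \<in> support t" for x1 x2
  proof -
    have "x1 \<in> M" "x2 \<in> M" "act t x1 = b" "act t x2 = b" using that two_valued by (auto simp: support_def)
    then show ?thesis using act_join[OF t(1)] join_idem b join_closed by (simp add: support_def)
  qed
  then obtain a where a: "a \<in> support t" "\<forall>x\<in>support t. x \<sqsubseteq> a"
    using finite_join_closed_has_greatest[OF _ t(2)] finite_M by (auto simp: support_def)
  have aM: "a \<in> M" "act t a = b" using a two_valued by (auto simp: support_def)
  have "act t x = (if x \<sqsubseteq> a then b else g)" if x: "x \<in> M" for x
  proof (cases "x \<sqsubseteq> a")
    case True
    then have "act t x \<sqsubseteq> b" using act_mono[OF t(1) x aM(1)] aM by simp
    then show ?thesis using sl_top_le_eq b True two_valued x by metis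
  next
    case False
    then show ?thesis using a x by (auto simp: support_def)
  qed
  moreover have "a \<noteq> g" using aM act_top t(1) b by auto
  ultimately show ?thesis using t(1) aM(1) b by blast
qed

text \<open>From one rank-one map \<open>f\<^sub>a\<^sub>0\<^sub>,\<^sub>b\<^sub>0\<close>: \<open>f\<^sub>a\<^sub>,\<^sub>b = s \<circ> f\<^sub>a\<^sub>0\<^sub>,\<^sub>b\<^sub>0 \<circ> r\<close> with \<open>s b\<^sub>0 = b\<close> by
  transitivity and \<open>r\<^sup>-\<^sup>1(\<down>a\<^sub>0) = \<down>a\<close> by dual transitivity.\<close>
lemma exists_fab_act:
  assumes a: "a \<in> M" "a \<noteq> g" and b: "b \<in> M"
  shows "\<exists>s\<in>S. \<forall>x\<in>M. act s x = (if x \<sqsubseteq> a then b else g)"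
proof -
  obtain t a0 b0 where t: "t \<in> S" "a0 \<in> M" "b0 \<in> M" "a0 \<noteq> g" "b0 \<noteq> g"
    "\<forall>x\<in>M. act t x = (if x \<sqsubseteq> a0 then b0 else g)" using exists_rank_one by blast
  obtain s where s: "s \<in> S" "act s b0 = b" using act_transitive[OF t(3) t(5) b] by blast
  obtain r where r: "r \<in> S" "\<forall>x\<in>M. act r x \<sqsubseteq> a0 \<longleftrightarrow> x \<sqsubseteq> a"
    using dual_transitive[OF t(2,4) a] by blast
  have "act (mul s (mul t r)) x = (if x \<sqsubseteq> a then b else g)" if x: "x \<in> M" for x
  proof -
    have "act (mul s (mul t r)) x = act s (act t (act r x))"
      using act_mul s t r x mul_closed act_closed by simp
    also have "\<dots> = (if x \<sqsubseteq> a then b else g)"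
      using t(6) r(2) act_closed[OF r(1) x] x s act_top by simp
    finally show ?thesis .
  qed
  then show ?thesis using mul_closed s t r by blast
qed

end

locale simple_idem_irreducible_smod = idem_irreducible_smod +
  assumes simple: "simple_semiring S add mul"
begin

lemma inj_on_act_map: "inj_on act_map S"
proof -
  have cong: "semiring_cong S add mul (Restr (kernel act_map) S)"
    by (rule semiring_cong_kernel_hom[OF semiring_S act_map_add act_map_mul])
  have "Restr (kernel act_map) S \<noteq> S \<times> S"
  proof
    assume "Restr (kernel act_map) S = S \<times> S"
    then have "act_map r = act_map s" if "r \<in> S" "s \<in> S" for r s
      using Restr_kernel_eq_TimesD that by metis
    then have "quasitrivial S M act" unfolding quasitrivial_def by (metis act_map_apply)
    then show False using not_quasitrivial by simp
  qed
  then have "Restr (kernel act_map) S = Id_on S"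
    using simple cong unfolding simple_semiring_def by blast
  then show ?thesis by (rule inj_on_if_Restr_kernel_eq_Id_on)
qed

lemma semiring_iso_act_map: "semiring_iso S add mul (act_map ` S) (fjoin M madd) (fcomp M) act_map"
  unfolding semiring_iso_def bij_betw_def using inj_on_act_map act_map_add act_map_mul by simp

end

locale simple_idem_irreducible_smod_star = idem_irreducible_smod_star + simple_idem_irreducible_smod
begin

text \<open>\<open>above_fab\<close> is an ideal absorbing addition; it contains the two distinct elements
  \<open>ob\<close> and a rank-one map, so its Rees congruence is all of \<open>S \<times> S\<close>.\<close>
lemma above_fab_eq_S: "above_fab = S"
proof -
  obtain t a0 b where t: "t \<in> S" "a0 \<in> M" "b \<in> M" "a0 \<noteq> g" "b \<noteq> g"
    "\<forall>x\<in>M. act t x = (if x \<sqsubseteq> a0 then b else g)" using exists_rank_one by blast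
  obtain a where a: "a \<in> M" "a \<noteq> g" using exists_ne_top by blast
  have "\<forall>x\<in>M. (if x \<sqsubseteq> a0 then b else g) \<sqsubseteq> act t x" using t(6) join_idem t(3) top_in by simp
  then have "t \<in> above_fab" using t(1-4) unfolding above_fab_def by blast
  moreover have "\<forall>x\<in>M. (if x \<sqsubseteq> a then g else g) \<sqsubseteq> act ob x" using act_ob join_idem top_in by simp
  then have "ob \<in> above_fab" using ob_in a top_in unfolding above_fab_def by blast
  moreover have "t \<noteq> ob" using t act_ob sl_le_refl by force
  moreover have "above_fab \<subseteq> S" by (auto simp: above_fab_def)
  moreover have "mul s r \<in> above_fab \<and> mul r s \<in> above_fab" if "s \<in> above_fab" "r \<in> S" for s r
    using above_fab_mul_left above_fab_mul_right that by blast
  ultimately show ?thesis using simple_semiring_ideal_eq[OF simple _ above_fab_add] by metis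
qed

lemma admissible_act_maps: "admissible M madd g (act_map ` S)"
proof -
  have "semilattice_top_on M madd g"
    unfolding semilattice_top_on_def using join_closed join_comm join_assoc join_idem top_in join_top by blast
  then have "fin_join_sl M madd g" using finite_M by (simp add: fin_join_sl_iff)
  moreover have "fab M madd g a b \<in> act_map ` S" if ab: "a \<in> M - {g}" "b \<in> M" for a b
  proof -
    obtain s where s: "s \<in> S" "\<forall>x\<in>M. act s x = (if x \<sqsubseteq> a then b else g)"
      using exists_fab_act[of a b] ab by auto
    then have "fab M madd g a b = act_map s"
      unfolding fab_def act_map_def sl_le_def by (intro restrict_ext) simp
    then show ?thesis using s(1) by blast
  qed
  moreover have "\<exists>a\<in>M - {g}. \<exists>b\<in>M. \<forall>x\<in>M. sl_le madd (fab M madd g a b x) (act_map s x)"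
    if s: "s \<in> S" for s
  proof -
    have "s \<in> above_fab" using above_fab_eq_S s by simp
    then obtain a b where ab: "a \<in> M" "a \<noteq> g" "b \<in> M" "\<forall>x\<in>M. (if x \<sqsubseteq> a then b else g) \<sqsubseteq> act s x"
      by (auto simp: above_fab_def)
    then show ?thesis
      by (intro bexI[of _ a] bexI[of _ b]) (simp_all add: fab_apply act_map_apply sl_le_def)
  qed
  moreover have "fjoin M madd f h \<in> act_map ` S \<and> fcomp M f h \<in> act_map ` S"
    if "f \<in> act_map ` S" "h \<in> act_map ` S" for f h
    using that by (auto simp: act_map_add[symmetric] act_map_mul[symmetric] add_closed mul_closed)
  ultimately show ?thesis
    unfolding admissible_def using exists_ne_top sl_star_M act_map_JM1 S_nonempty by auto
qed

end

theorem simple_semiring_iso_admissible: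
  fixes S :: "'s set" and M :: "'m set"
  assumes simple: "simple_semiring S add mul" and greatest: "has_absorbing_greatest S add mul"
    and module: "semimodule S add mul M madd act" and idem: "smod_idempotent M madd"
    and irr: "irreducible_smod S add mul M madd act" and star: "sl_star M madd"
  shows "\<exists>(L :: 'm set) j one (R :: ('m \<Rightarrow> 'm) set) \<phi>.
    admissible L j one R \<and> semiring_iso S add mul R (fjoin L j) (fcomp L) \<phi>"
proof -
  obtain g u where g: "g \<in> M" "\<And>x. x \<in> M \<Longrightarrow> madd x g = g"
    and u: "u \<in> M" "\<And>x. x \<in> M \<Longrightarrow> x \<noteq> g \<Longrightarrow> madd u x \<noteq> g" and fin: "finite M"
    using star unfolding sl_star_def by fastforce
  obtain ob where ob: "ob \<in> S" "\<And>s. s \<in> S \<Longrightarrow> add s ob = ob"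
    "\<And>s. s \<in> S \<Longrightarrow> mul s ob = ob \<and> mul ob s = ob"
    using greatest unfolding has_absorbing_greatest_def by blast
  interpret simple_idem_irreducible_smod_star M madd g S add mul act ob u
    using module idem g u fin ob simple irr
    by unfold_locales (auto simp: semimodule_def smod_idempotent_def)
  show ?thesis using admissible_act_maps semiring_iso_act_map by blast
qed

theorem theorem5p4:
  shows "(\<forall>(L :: 'l set) j one (R :: ('l \<Rightarrow> 'l) set).
           admissible L j one R \<longrightarrow>
             finite R \<and> simple_semiring R (fjoin L j) (fcomp L) \<and>
             add_idempotent R (fjoin L j) \<and>
             has_absorbing_greatest R (fjoin L j) (fcomp L) \<and>
             (\<exists>(M :: 'l set) madd act.
                semimodule R (fjoin L j) (fcomp L) M madd act \<and>
                smod_idempotent M madd \<and>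
                irreducible_smod R (fjoin L j) (fcomp L) M madd act \<and>
                sl_star M madd))
       \<and>
       (\<forall>(S :: 's set) add mul (M :: 'm set) madd act.
           finite S \<and> simple_semiring S add mul \<and> add_idempotent S add \<and>
           card S > 2 \<and> has_absorbing_greatest S add mul \<and>
           semimodule S add mul M madd act \<and> smod_idempotent M madd \<and>
           irreducible_smod S add mul M madd act \<and> sl_star M madd \<longrightarrow>
           (\<exists>(L :: 'm set) j one (R :: ('m \<Rightarrow> 'm) set) \<phi>.
              admissible L j one R \<and>
              semiring_iso S add mul R (fjoin L j) (fcomp L) \<phi>))"
  using admissible_imp_simple_semiring_with_irreducible_module simple_semiring_iso_admissible
  by blast

end
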